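(* Let $\gamma$ be a cocycle. Then (i) $|\gamma^{dom}(\lambda)|\ge1$ for every $\lambda\in\Lambda$; (ii) $|\gamma^{dom}(\lambda\mu)|\le|\gamma^{dom}(\lambda)|\,|\gamma^{dom}(\mu)|$ for all $\lambda,\mu\in\Lambda$.
   Context: $L$ is a finite extension of $\mathbb{Q}_p$, $K$ a complete extension field of $\mathbb{Q}_p$ containing $L$ with absolute value $|\ |$; $|\ |_L$ normalized absolute value of $L$. $G$ is the $L$-points of an $L$-split connected reductive group, $T$ a maximal $L$-split torus, $P$ a Borel subgroup containing $T$, $W=N(T)/T$, $U_0$ a maximal compact subgroup special with respect to $T$, $\Lambda=T/(U_0\cap T)$ (written multiplicatively), $\lambda:T\to\Lambda$ the projection, $W$ acting on $\Lambda$ by conjugation (${}^w\lambda$). $T^{--}=\{t:|\alpha(t)|_L\ge1$ for all roots $\alpha$ positive for $P\}$, $\Lambda^{--}=\lambda(T^{--})$. A cocycle is $\gamma:W\times\Lambda\to K^\times$ with (a) $\gamma(w,\lambda\mu)=\gamma(w,\lambda)\gamma(w,\mu)$; (b) $\gamma(vw,\lambda)=\gamma(v,{}^w\lambda)\gamma(w,\lambda)$; (c) $|\gamma(w,\lambda)|\le1$ for $\lambda\in\Lambda^{--}$; (d) $\gamma(w,\lambda)=1$ if ${}^w\lambda=\lambda$. $\gamma^{dom}(\lambda):=\gamma(w,\lambda)$ for any $w\in W$ with ${}^w\lambda\in\Lambda^{--}$ (well defined by (d)). *)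

theory Defs
  imports Complex_Main "HOL-Algebra.Group"
begin

text \<open>W : the (finite) Weyl group, as a HOL-Algebra group.
  Lam : the abelian group Lambda = T/(U0 cap T), written multiplicatively.
  act w l : the conjugation action of w on l (written  ^w l  in the paper).
  Ldd : the subset Lambda^{--} = lambda(T^{--}).
  absv : the absolute value of the field K (values of gamma lie in K^x).\<close>

text \<open>Properties of (W, Lambda, action, Lambda^{--}) coming from the structure
  theory of split reductive groups: W is a finite group acting on the abelian group
  Lambda by group automorphisms, Lambda^{--} is a submonoid, every W-orbit meets
  Lambda^{--}, and it meets it in exactly one point.\<close>
definition weyl_datum ::
  "('w, 'a) monoid_scheme \<Rightarrow> ('l, 'b) monoid_scheme \<Rightarrow> ('w \<Rightarrow> 'l \<Rightarrow> 'l) \<Rightarrow> 'l set \<Rightarrow> bool"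
where
  "weyl_datum W Lam act Ldd \<longleftrightarrow>
     group W \<and> finite (carrier W) \<and> comm_group Lam \<and>
     (\<forall>w\<in>carrier W. \<forall>l\<in>carrier Lam. act w l \<in> carrier Lam) \<and>
     (\<forall>l\<in>carrier Lam. act \<one>\<^bsub>W\<^esub> l = l) \<and>
     (\<forall>v\<in>carrier W. \<forall>w\<in>carrier W. \<forall>l\<in>carrier Lam.
         act (v \<otimes>\<^bsub>W\<^esub> w) l = act v (act w l)) \<and>
     (\<forall>w\<in>carrier W. \<forall>l\<in>carrier Lam. \<forall>m\<in>carrier Lam.
         act w (l \<otimes>\<^bsub>Lam\<^esub> m) = act w l \<otimes>\<^bsub>Lam\<^esub> act w m) \<and>
     Ldd \<subseteq> carrier Lam \<and> \<one>\<^bsub>Lam\<^esub> \<in> Ldd \<and>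
     (\<forall>l\<in>Ldd. \<forall>m\<in>Ldd. l \<otimes>\<^bsub>Lam\<^esub> m \<in> Ldd) \<and>
     (\<forall>l\<in>carrier Lam. \<exists>w\<in>carrier W. act w l \<in> Ldd) \<and>
     (\<forall>l\<in>carrier Lam. \<forall>v\<in>carrier W. \<forall>w\<in>carrier W.
         act v l \<in> Ldd \<longrightarrow> act w l \<in> Ldd \<longrightarrow> act v l = act w l)"

text \<open>An absolute value on the field K (non-archimedean, as K is a complete
  extension of Q_p).\<close>
definition absolute_value :: "('k::field \<Rightarrow> real) \<Rightarrow> bool" where
  "absolute_value absv \<longleftrightarrow>
     (\<forall>x. 0 \<le> absv x) \<and> (\<forall>x. absv x = 0 \<longleftrightarrow> x = 0) \<and>
     (\<forall>x y. absv (x * y) = absv x * absv y) \<and>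
     (\<forall>x y. absv (x + y) \<le> max (absv x) (absv y))"

definition cocycle ::
  "('w, 'a) monoid_scheme \<Rightarrow> ('l, 'b) monoid_scheme \<Rightarrow> ('w \<Rightarrow> 'l \<Rightarrow> 'l) \<Rightarrow> 'l set \<Rightarrow>
   ('k::field \<Rightarrow> real) \<Rightarrow> ('w \<Rightarrow> 'l \<Rightarrow> 'k) \<Rightarrow> bool"
where
  "cocycle W Lam act Ldd absv \<gamma> \<longleftrightarrow>
     (\<forall>w\<in>carrier W. \<forall>l\<in>carrier Lam. \<gamma> w l \<noteq> 0) \<and>
     (\<forall>w\<in>carrier W. \<forall>l\<in>carrier Lam. \<forall>m\<in>carrier Lam.
         \<gamma> w (l \<otimes>\<^bsub>Lam\<^esub> m) = \<gamma> w l * \<gamma> w m) \<and>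
     (\<forall>v\<in>carrier W. \<forall>w\<in>carrier W. \<forall>l\<in>carrier Lam.
         \<gamma> (v \<otimes>\<^bsub>W\<^esub> w) l = \<gamma> v (act w l) * \<gamma> w l) \<and>
     (\<forall>w\<in>carrier W. \<forall>l\<in>Ldd. absv (\<gamma> w l) \<le> 1) \<and>
     (\<forall>w\<in>carrier W. \<forall>l\<in>carrier Lam. act w l = l \<longrightarrow> \<gamma> w l = 1)"

definition gamma_dom ::
  "('w, 'a) monoid_scheme \<Rightarrow> ('w \<Rightarrow> 'l \<Rightarrow> 'l) \<Rightarrow> 'l set \<Rightarrow> ('w \<Rightarrow> 'l \<Rightarrow> 'k) \<Rightarrow> 'l \<Rightarrow> 'k"
where
  "gamma_dom W act Ldd \<gamma> l = \<gamma> (SOME w. w \<in> carrier W \<and> act w l \<in> Ldd) l"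

end

theory Submission
  imports Defs
begin

text \<open>If w(\<lambda>) is dominant then \<gamma>(w,\<lambda>) is the inverse of \<gamma>(w\<inverse>, w(\<lambda>)), whose
  absolute value is at most 1; hence |\<gamma>(w,\<lambda>)| \<ge> 1, which gives (i). Writing
  \<gamma>(v,\<lambda>) = \<gamma>(v u\<inverse>, u(\<lambda>)) \<gamma>(u,\<lambda>) with v(\<lambda>) dominant shows that |\<gamma>^dom(\<lambda>)| is the
  maximum of |\<gamma>(u,\<lambda>)| over u \<in> W. For (ii) take u with u(\<lambda>\<mu>) dominant: then
  |\<gamma>^dom(\<lambda>\<mu>)| = |\<gamma>(u,\<lambda>)| |\<gamma>(u,\<mu>)|, and each factor is bounded by that maximum.\<close>

lemma absolute_value_mult: "absolute_value absv \<Longrightarrow> absv (x * y) = absv x * absv y"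
  unfolding absolute_value_def by blast

lemma absolute_value_nonneg: "absolute_value absv \<Longrightarrow> 0 \<le> absv x"
  unfolding absolute_value_def by blast

lemma absolute_value_one: "absolute_value absv \<Longrightarrow> absv 1 = 1"
  unfolding absolute_value_def by (metis mult_1 mult_cancel_right1 one_neq_zero)

locale weyl_cocycle =
  fixes W :: "('w, 'a) monoid_scheme" and Lam :: "('l, 'b) monoid_scheme"
    and act :: "'w \<Rightarrow> 'l \<Rightarrow> 'l" and Ldd :: "'l set"
    and absv :: "'k::field \<Rightarrow> real" and \<gamma> :: "'w \<Rightarrow> 'l \<Rightarrow> 'k"
  assumes weyl: "weyl_datum W Lam act Ldd"
    and absv: "absolute_value absv"
    and cocycle: "cocycle W Lam act Ldd absv \<gamma>"
begin

sublocale W: group W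
  using weyl unfolding weyl_datum_def by blast

sublocale Lam: comm_group Lam
  using weyl unfolding weyl_datum_def by blast

lemma act_closed: "w \<in> carrier W \<Longrightarrow> l \<in> carrier Lam \<Longrightarrow> act w l \<in> carrier Lam"
  using weyl unfolding weyl_datum_def by blast

lemma act_mult:
  "v \<in> carrier W \<Longrightarrow> w \<in> carrier W \<Longrightarrow> l \<in> carrier Lam \<Longrightarrow>
   act (v \<otimes>\<^bsub>W\<^esub> w) l = act v (act w l)"
  using weyl unfolding weyl_datum_def by blast

lemma cocycle_mult:
  "v \<in> carrier W \<Longrightarrow> w \<in> carrier W \<Longrightarrow> l \<in> carrier Lam \<Longrightarrow>
   \<gamma> (v \<otimes>\<^bsub>W\<^esub> w) l = \<gamma> v (act w l) * \<gamma> w l"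
  using cocycle unfolding cocycle_def by blast

lemma cocycle_one:
  assumes "l \<in> carrier Lam"
  shows "\<gamma> \<one>\<^bsub>W\<^esub> l = 1"
proof -
  have "act \<one>\<^bsub>W\<^esub> l = l"
    using weyl assms unfolding weyl_datum_def by blast
  then show ?thesis
    using cocycle assms W.one_closed unfolding cocycle_def by blast
qed

lemma cocycle_inv_mult:
  assumes "w \<in> carrier W" and "l \<in> carrier Lam"
  shows "\<gamma> (inv\<^bsub>W\<^esub> w) (act w l) * \<gamma> w l = 1"
  using cocycle_mult[of "inv\<^bsub>W\<^esub> w" w l] cocycle_one assms by simp

lemma abs_cocycle_ge_one:
  assumes w: "w \<in> carrier W" and l: "l \<in> carrier Lam" and dom: "act w l \<in> Ldd"
  shows "1 \<le> absv (\<gamma> w l)"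
proof -
  have "absv (\<gamma> (inv\<^bsub>W\<^esub> w) (act w l)) * absv (\<gamma> w l) = 1"
    using cocycle_inv_mult[OF w l] absolute_value_mult[OF absv] absolute_value_one[OF absv]
    by metis
  moreover have "absv (\<gamma> (inv\<^bsub>W\<^esub> w) (act w l)) \<le> 1"
    using cocycle w dom unfolding cocycle_def by blast
  moreover have "0 \<le> absv (\<gamma> w l)"
    by (rule absolute_value_nonneg[OF absv])
  ultimately show ?thesis
    by (metis mult_left_le mult.commute)
qed

lemma gamma_dom_witness:
  assumes "l \<in> carrier Lam"
  obtains w where "w \<in> carrier W" and "act w l \<in> Ldd" and "gamma_dom W act Ldd \<gamma> l = \<gamma> w l"
proof -
  have "\<exists>w. w \<in> carrier W \<and> act w l \<in> Ldd"
    using weyl assms unfolding weyl_datum_def by blast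
  then show thesis
    using that someI_ex[of "\<lambda>w. w \<in> carrier W \<and> act w l \<in> Ldd"] unfolding gamma_dom_def by blast
qed

lemma abs_gamma_dom_ge_one: "l \<in> carrier Lam \<Longrightarrow> 1 \<le> absv (gamma_dom W act Ldd \<gamma> l)"
  by (metis gamma_dom_witness abs_cocycle_ge_one)

lemma abs_cocycle_le_abs_gamma_dom:
  assumes u: "u \<in> carrier W" and l: "l \<in> carrier Lam"
  shows "absv (\<gamma> u l) \<le> absv (gamma_dom W act Ldd \<gamma> l)"
proof -
  obtain v where v: "v \<in> carrier W" "act v l \<in> Ldd" and dom: "gamma_dom W act Ldd \<gamma> l = \<gamma> v l"
    using gamma_dom_witness[OF l] by blast
  define x where "x = v \<otimes>\<^bsub>W\<^esub> inv\<^bsub>W\<^esub> u"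
  have x: "x \<in> carrier W" and xu: "x \<otimes>\<^bsub>W\<^esub> u = v"
    using u v(1) unfolding x_def by (simp_all add: W.m_assoc)
  have "act x (act u l) \<in> Ldd"
    using act_mult[OF x u l] xu v(2) by simp
  then have "1 \<le> absv (\<gamma> x (act u l))"
    using abs_cocycle_ge_one[OF x act_closed[OF u l]] by blast
  moreover have "absv (\<gamma> v l) = absv (\<gamma> x (act u l)) * absv (\<gamma> u l)"
    using cocycle_mult[OF x u l] xu absolute_value_mult[OF absv] by simp
  ultimately show ?thesis
    using dom absolute_value_nonneg[OF absv, of "\<gamma> u l"] by (simp add: mult_le_cancel_right1)
qed

lemma abs_gamma_dom_mult_le:
  assumes l: "l \<in> carrier Lam" and m: "m \<in> carrier Lam"
  shows "absv (gamma_dom W act Ldd \<gamma> (l \<otimes>\<^bsub>Lam\<^esub> m))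
           \<le> absv (gamma_dom W act Ldd \<gamma> l) * absv (gamma_dom W act Ldd \<gamma> m)"
proof -
  obtain u where u: "u \<in> carrier W" and dom: "gamma_dom W act Ldd \<gamma> (l \<otimes>\<^bsub>Lam\<^esub> m) = \<gamma> u (l \<otimes>\<^bsub>Lam\<^esub> m)"
    using gamma_dom_witness[OF Lam.m_closed[OF l m]] by blast
  have "\<gamma> u (l \<otimes>\<^bsub>Lam\<^esub> m) = \<gamma> u l * \<gamma> u m"
    using cocycle u l m unfolding cocycle_def by blast
  then have "absv (gamma_dom W act Ldd \<gamma> (l \<otimes>\<^bsub>Lam\<^esub> m)) = absv (\<gamma> u l) * absv (\<gamma> u m)"
    using dom absolute_value_mult[OF absv] by simp
  also have "\<dots> \<le> absv (gamma_dom W act Ldd \<gamma> l) * absv (gamma_dom W act Ldd \<gamma> m)"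
    using abs_cocycle_le_abs_gamma_dom[OF u l] abs_cocycle_le_abs_gamma_dom[OF u m]
    by (simp add: mult_mono' absolute_value_nonneg[OF absv])
  finally show ?thesis .
qed

end

theorem lemma2p1:
  fixes W :: "('w, 'a) monoid_scheme" and Lam :: "('l, 'b) monoid_scheme"
    and act :: "'w \<Rightarrow> 'l \<Rightarrow> 'l" and Ldd :: "'l set"
    and absv :: "'k::field \<Rightarrow> real" and \<gamma> :: "'w \<Rightarrow> 'l \<Rightarrow> 'k"
  assumes "weyl_datum W Lam act Ldd"
    and "absolute_value absv"
    and "cocycle W Lam act Ldd absv \<gamma>"
  shows "(\<forall>l\<in>carrier Lam. absv (gamma_dom W act Ldd \<gamma> l) \<ge> 1) \<and>
         (\<forall>l\<in>carrier Lam. \<forall>m\<in>carrier Lam.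
            absv (gamma_dom W act Ldd \<gamma> (l \<otimes>\<^bsub>Lam\<^esub> m))
              \<le> absv (gamma_dom W act Ldd \<gamma> l) * absv (gamma_dom W act Ldd \<gamma> m))"
proof -
  interpret weyl_cocycle W Lam act Ldd absv \<gamma>
    using assms by unfold_locales
  show ?thesis
    using abs_gamma_dom_ge_one abs_gamma_dom_mult_le by blast
qed

end
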